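(* Consider an instance of General MinMD$+$OCTC$_{line}$ in which all base stations satisfy $y(b_k)\ge 0$. There exists an optimal solution with the following property: for every opened base station $b_k$, if $[x(t_i),x(t_j)]$ is the leftmost target interval covered by a sensor $s_u$ emitted by $b_k$ and $[x(t_{i'}),x(t_{j'})]$ is the rightmost target interval covered by a sensor $s_v$ emitted by $b_k$, then every target $t$ with $x(t)\in[x(t_i),x(t_{j'})]$ is covered by a sensor emitted by $b_k$.
   Context: General MinMD$+$OCTC$_{line}$: targets $\mathcal{T}=\{t_1,\dots,t_n\}$ lie on a line $L$, taken as the $x$-axis, so $t_i=(x(t_i),0)$, sorted left to right. Base stations $\mathcal{B}=\{b_1,\dots,b_m\}$ are points of the plane with opening costs $c_k\ge 0$. A fixed radius $r\ge 0$ is given. A solution consists of a set of opened base stations and a finite multiset of mobile sensors; each sensor $s$ is emitted by some opened base station $b_k$ and placed at an arbitrary destination point in the plane (not necessarily on $L$); its moving distance is the Euclidean distance from $b_k$ to its destination. A sensor covers a target if the target is at Euclidean distance at most $r$ from the sensor's destination. An opened base station may emit arbitrarily many sensors. A solution is feasible if every target is covered; its cost is the sum of opening costs of opened base stations plus the total moving distance; the goal is to minimize cost. The target interval covered by a sensor $s$ is $[x(t_i),x(t_j)]$ where $t_i$ and $t_j$ are the leftmost and rightmost targets covered by $s$. *)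

theory Defs
  imports "HOL-Analysis.Analysis" "HOL-Library.Multiset"
begin

(* Targets are given by their x-coordinates T :: real set; target t is the point (t,0).
   Base stations are indices 'b in a finite set B, with position pos k :: real \<times> real
   (the product metric on real \<times> real is the Euclidean metric) and opening cost c k.
   A sensor is a pair (k, p): emitted by base station k, placed at destination p.
   A solution is a set Op of opened base stations and a finite multiset S of sensors. *)

definition covers :: "real \<Rightarrow> real \<times> real \<Rightarrow> real \<Rightarrow> bool" where
  "covers r p t \<longleftrightarrow> dist p (t, 0) \<le> r"

definition feasible ::
  "real set \<Rightarrow> 'b set \<Rightarrow> real \<Rightarrow> 'b set \<Rightarrow> ('b \<times> (real \<times> real)) multiset \<Rightarrow> bool" where
  "feasible T B r Op S \<longleftrightarrow>
     Op \<subseteq> B \<and> (\<forall>s \<in># S. fst s \<in> Op) \<and> (\<forall>t \<in> T. \<exists>s \<in># S. covers r (snd s) t)"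

definition cost ::
  "('b \<Rightarrow> real \<times> real) \<Rightarrow> ('b \<Rightarrow> real) \<Rightarrow> 'b set \<Rightarrow> ('b \<times> (real \<times> real)) multiset \<Rightarrow> real" where
  "cost pos c Op S = (\<Sum>k \<in> Op. c k) + (\<Sum>s \<in># S. dist (pos (fst s)) (snd s))"

definition optimal ::
  "real set \<Rightarrow> 'b set \<Rightarrow> ('b \<Rightarrow> real \<times> real) \<Rightarrow> ('b \<Rightarrow> real) \<Rightarrow> real
    \<Rightarrow> 'b set \<Rightarrow> ('b \<times> (real \<times> real)) multiset \<Rightarrow> bool" where
  "optimal T B pos c r Op S \<longleftrightarrow> feasible T B r Op S \<and>
     (\<forall>Op' S'. feasible T B r Op' S' \<longrightarrow> cost pos c Op S \<le> cost pos c Op' S')"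

definition covered_targets :: "real set \<Rightarrow> real \<Rightarrow> real \<times> real \<Rightarrow> real set" where
  "covered_targets T r p = {t \<in> T. covers r p t}"

(* target interval [x(t_i), x(t_j)] of a sensor at p (meaningful if it covers some target) *)
definition interval_left :: "real set \<Rightarrow> real \<Rightarrow> real \<times> real \<Rightarrow> real" where
  "interval_left T r p = Min (covered_targets T r p)"

definition interval_right :: "real set \<Rightarrow> real \<Rightarrow> real \<times> real \<Rightarrow> real" where
  "interval_right T r p = Max (covered_targets T r p)"

definition contiguous_property ::
  "real set \<Rightarrow> real \<Rightarrow> 'b set \<Rightarrow> ('b \<times> (real \<times> real)) multiset \<Rightarrow> bool" where
  "contiguous_property T r Op S \<longleftrightarrow>
    (\<forall>k \<in> Op. \<forall>u v.
       u \<in># S \<and> fst u = k \<and> covered_targets T r (snd u) \<noteq> {} \<and>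
       v \<in># S \<and> fst v = k \<and> covered_targets T r (snd v) \<noteq> {} \<and>
       (\<forall>w \<in># S. fst w = k \<and> covered_targets T r (snd w) \<noteq> {} \<longrightarrow>
           interval_left T r (snd u) \<le> interval_left T r (snd w)) \<and>
       (\<forall>w \<in># S. fst w = k \<and> covered_targets T r (snd w) \<noteq> {} \<longrightarrow>
           interval_right T r (snd w) \<le> interval_right T r (snd v))
       \<longrightarrow> (\<forall>t \<in> T. interval_left T r (snd u) \<le> t \<and> t \<le> interval_right T r (snd v)
              \<longrightarrow> (\<exists>w \<in># S. fst w = k \<and> covers r (snd w) t)))"

end

theory Submission
  imports Defs "HOL-Library.List_Lexorder"
begin

text \<open>
  For an interval [e, f] of targets with f - e \<le> 2r, the destinations covering both end
  targets form the lens cball (e,0) r \<inter> cball (f,0) r, and a sensor there covers every target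
  in [e, f]. So every solution is dominated by one that covers the targets by such intervals,
  each served by one sensor sent from the best station to the nearest point of the lens.
  Two facts control which station is best: if P is no farther than Q from both (e,0) and
  (f,0), then P is no farther from the lens; and dist P (s,0)^2 - dist Q (s,0)^2 is affine in s.
  Hence the winner of an interval is strictly closer than any other station at some point of
  it (ties broken by the midpoint, then by a fixed ranking), and affinity forbids one station
  from winning two intervals that enclose an interval won by another station. Among the
  least-cost interval covers, one of least total size has pairwise separated intervals, and
  then the targets served by each station are contiguous.
\<close>

lemma dist_Pair_sq: "(dist (a, b) (c, d))\<^sup>2 = (a - c)\<^sup>2 + (b - d)\<^sup>2" for a b c d :: real
  by (simp add: dist_Pair_Pair dist_real_def)

lemma dist_le_iff_sq_le: "0 \<le> r \<Longrightarrow> dist x y \<le> r \<longleftrightarrow> (dist x y)\<^sup>2 \<le> r\<^sup>2"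
  by (meson zero_le_dist power2_le_imp_le power_mono)

lemma dist_eq_if_sq_eq: "(dist x y)\<^sup>2 = b\<^sup>2 \<Longrightarrow> 0 \<le> b \<Longrightarrow> dist x y = b"
  by (rule power2_eq_imp_eq) auto

lemma covers_iff_sq_le: "0 \<le> r \<Longrightarrow> covers r w t \<longleftrightarrow> (fst w - t)\<^sup>2 + (snd w)\<^sup>2 \<le> r\<^sup>2"
  by (cases w) (simp add: covers_def dist_le_iff_sq_le dist_Pair_sq)

lemma covers_between:
  assumes "covers r w t1" "covers r w t2" "t1 \<le> t" "t \<le> t2"
  shows "covers r w t"
proof -
  have r: "0 \<le> r" using assms(1) unfolding covers_def by (meson zero_le_dist order_trans)
  have "\<bar>fst w - t\<bar> \<le> \<bar>fst w - t1\<bar> \<or> \<bar>fst w - t\<bar> \<le> \<bar>fst w - t2\<bar>"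
    using assms(3,4) by linarith
  then have "(fst w - t)\<^sup>2 \<le> (fst w - t1)\<^sup>2 \<or> (fst w - t)\<^sup>2 \<le> (fst w - t2)\<^sup>2"
    by (simp add: abs_le_square_iff)
  with assms(1,2) show ?thesis by (auto simp: covers_iff_sq_le[OF r])
qed

definition lens :: "real \<Rightarrow> real \<Rightarrow> real \<Rightarrow> (real \<times> real) set" where
  "lens r e f = cball (e, 0) r \<inter> cball (f, 0) r"

lemma in_lens_iff: "w \<in> lens r e f \<longleftrightarrow> covers r w e \<and> covers r w f"
  by (simp add: lens_def covers_def dist_commute)

lemma covers_if_in_lens: "w \<in> lens r e f \<Longrightarrow> e \<le> t \<Longrightarrow> t \<le> f \<Longrightarrow> covers r w t"
  by (meson covers_between in_lens_iff)

lemma midpoint_in_lens: "e \<le> f \<Longrightarrow> f - e \<le> 2 * r \<Longrightarrow> ((e + f) / 2, 0) \<in> lens r e f"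
  by (simp add: in_lens_iff covers_def dist_Pair_Pair dist_real_def)

lemma lens_antimono: "e \<le> e' \<Longrightarrow> e' \<le> f' \<Longrightarrow> f' \<le> f \<Longrightarrow> lens r e f \<subseteq> lens r e' f'"
  by (meson covers_between in_lens_iff order_trans subsetI)

lemma dist_sq_convex_comb:
  fixes X :: "real \<times> real"
  shows "(dist X ((1 - l) * e + l * f, 0))\<^sup>2
    = (1 - l) * (dist X (e, 0))\<^sup>2 + l * (dist X (f, 0))\<^sup>2 - l * (1 - l) * (f - e)\<^sup>2"
  by (cases X) (simp only: dist_Pair_sq, simp add: power2_eq_square algebra_simps)

lemma lens_subset_cball_convex_comb:
  assumes "0 \<le> l" "l \<le> 1" "0 \<le> r" "y \<in> lens r e f"
  shows "(dist y ((1 - l) * e + l * f, 0))\<^sup>2 \<le> r\<^sup>2 - l * (1 - l) * (f - e)\<^sup>2"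
proof -
  have "(dist y (e, 0))\<^sup>2 \<le> r\<^sup>2" "(dist y (f, 0))\<^sup>2 \<le> r\<^sup>2"
    using assms(3,4) by (auto simp: lens_def dist_commute intro: power_mono)
  then have "(1 - l) * (dist y (e, 0))\<^sup>2 + l * (dist y (f, 0))\<^sup>2 \<le> r\<^sup>2"
    using assms(1,2) by (intro convex_bound_le) auto
  then show ?thesis unfolding dist_sq_convex_comb by simp
qed

lemma dist_convex_comb_mono:
  fixes P Q :: "real \<times> real"
  assumes "0 \<le> l" "l \<le> 1" "dist P (e, 0) \<le> dist Q (e, 0)" "dist P (f, 0) \<le> dist Q (f, 0)"
  shows "dist P ((1 - l) * e + l * f, 0) \<le> dist Q ((1 - l) * e + l * f, 0)"
proof (rule power2_le_imp_le)
  have "(dist P (e, 0))\<^sup>2 \<le> (dist Q (e, 0))\<^sup>2" "(dist P (f, 0))\<^sup>2 \<le> (dist Q (f, 0))\<^sup>2"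
    using assms(3,4) by (simp_all add: power_mono)
  then show "(dist P ((1 - l) * e + l * f, 0))\<^sup>2 \<le> (dist Q ((1 - l) * e + l * f, 0))\<^sup>2"
    unfolding dist_sq_convex_comb using assms(1,2)
    by (intro diff_right_mono add_mono mult_left_mono) auto
qed simp

text \<open>
  dist Q y \<ge> dist Q G - R \<ge> dist P G - R \<ge> dist P w: by Stewart's theorem the lens lies in
  the disc of radius R about G, and P is at least as close to G as Q.
\<close>
lemma dist_le_dist_to_lens_if_touching:
  fixes P Q w y :: "real \<times> real"
  assumes l: "0 \<le> l" "l \<le> 1" and R: "0 \<le> R" "R\<^sup>2 = r\<^sup>2 - l * (1 - l) * (f - e)\<^sup>2" and "0 \<le> r"
    and y: "y \<in> lens r e f"
    and touch: "dist P w + R \<le> dist P ((1 - l) * e + l * f, 0)"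
    and "dist P (e, 0) \<le> dist Q (e, 0)" "dist P (f, 0) \<le> dist Q (f, 0)"
  shows "dist P w \<le> dist Q y"
proof -
  define G where "G = ((1 - l) * e + l * f, 0 :: real)"
  have "dist y G \<le> R"
    using lens_subset_cball_convex_comb[OF l \<open>0 \<le> r\<close> y] R unfolding G_def
    by (simp add: dist_le_iff_sq_le)
  moreover have "dist P G \<le> dist Q G"
    unfolding G_def using dist_convex_comb_mono[OF l assms(8,9)] .
  moreover have "dist Q G \<le> dist Q y + dist y G" by (rule dist_triangle)
  ultimately show ?thesis using touch unfolding G_def by linarith
qed

lemma dist_add_dist_if_aligned:
  fixes P C G :: "'a::real_normed_vector"
  assumes "C - G = \<tau> *\<^sub>R (P - C)" "0 \<le> \<tau>"
  shows "dist P C + dist C G = dist P G"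
proof -
  have "P - G = (P - C) + (C - G)" by simp
  also have "\<dots> = (1 + \<tau>) *\<^sub>R (P - C)" using assms(1) by (simp add: scaleR_add_left)
  finally have "dist P G = (1 + \<tau>) * dist P C" using assms(2) by (simp add: dist_norm)
  moreover have "dist C G = \<tau> * dist P C" using assms by (simp add: dist_norm)
  ultimately show ?thesis by (simp add: algebra_simps)
qed

text \<open>
  The point where the segment from (e,0) to (p,q) leaves the disc about (e,0); the hypothesis
  beyond says that it lies in the disc about (f,0) as well.
\<close>
lemma radial_point_in_lens:
  fixes p q dE r :: real
  assumes dE: "dE\<^sup>2 = (p - e)\<^sup>2 + q\<^sup>2" "r < dE" and "0 \<le> r"
    and beyond: "(f - e) * ((f - e) * dE - 2 * r * (p - e)) \<le> 0"
    and k: "k = r / dE"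
  shows "(e + k * (p - e), k * q) \<in> lens r e f \<and> dist (p, q) (e + k * (p - e), k * q) = dE - r"
proof -
  have dE_pos: "0 < dE" using dE(2) \<open>0 \<le> r\<close> by linarith
  have kd: "k * dE = r" using dE_pos k by simp
  have k2: "k\<^sup>2 * dE\<^sup>2 = r\<^sup>2" using kd by (simp flip: power_mult_distrib)
  have "(dist (e + k * (p - e), k * q) (e, 0))\<^sup>2 = k\<^sup>2 * ((p - e)\<^sup>2 + q\<^sup>2)"
    unfolding dist_Pair_sq by (simp add: power2_eq_square algebra_simps)
  also have kq: "\<dots> = r\<^sup>2" using k2 dE(1) by simp
  finally have cov_e: "covers r (e + k * (p - e), k * q) e"
    by (simp add: covers_def dist_commute dist_le_iff_sq_le[OF \<open>0 \<le> r\<close>])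
  moreover have "(dist (e + k * (p - e), k * q) (f, 0))\<^sup>2
      = (f - e)\<^sup>2 - 2 * (f - e) * k * (p - e) + k\<^sup>2 * ((p - e)\<^sup>2 + q\<^sup>2)"
    unfolding dist_Pair_sq by (simp add: power2_eq_square algebra_simps)
  moreover have "(f - e)\<^sup>2 - 2 * (f - e) * k * (p - e)
      = (f - e) * ((f - e) * dE - 2 * r * (p - e)) / dE"
    using dE_pos unfolding k by (simp add: field_simps power2_eq_square)
  moreover have "(f - e) * ((f - e) * dE - 2 * r * (p - e)) / dE \<le> 0"
    using beyond dE_pos by (simp add: divide_nonpos_pos)
  ultimately have "covers r (e + k * (p - e), k * q) f"
    using kq by (simp add: covers_def dist_commute dist_le_iff_sq_le[OF \<open>0 \<le> r\<close>])
  moreover have "(dist (p, q) (e + k * (p - e), k * q))\<^sup>2 = ((1 - k) * dE)\<^sup>2"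
    unfolding dist_Pair_sq power_mult_distrib dE(1) by (simp add: power2_eq_square algebra_simps)
  moreover have "(1 - k) * dE = dE - r" using kd by (simp add: algebra_simps)
  ultimately show ?thesis
    using dE(2) cov_e by (auto simp: in_lens_iff intro: dist_eq_if_sq_eq)
qed

lemma cusp_condition:
  fixes p q dE \<delta> h r :: real
  assumes dE: "dE\<^sup>2 = (p - e)\<^sup>2 + q\<^sup>2" "0 \<le> dE" and ineq: "r * (p - e) < \<delta> * dE"
    and "\<delta> \<le> p - e" "0 \<le> \<delta>" "0 \<le> r" and h: "h\<^sup>2 = r\<^sup>2 - \<delta>\<^sup>2" "0 \<le> h"
  shows "h * (p - e) < \<delta> * \<bar>q\<bar>"
proof -
  have "0 \<le> r * (p - e)" using assms(4-6) by simp
  then have "(r * (p - e))\<^sup>2 < (\<delta> * dE)\<^sup>2" using ineq by (simp add: power_strict_mono)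
  then have "(h\<^sup>2 + \<delta>\<^sup>2) * (p - e)\<^sup>2 < \<delta>\<^sup>2 * ((p - e)\<^sup>2 + q\<^sup>2)"
    using h(1) by (simp add: power_mult_distrib dE(1))
  then have "h\<^sup>2 * (p - e)\<^sup>2 < \<delta>\<^sup>2 * q\<^sup>2" by (simp add: algebra_simps)
  then have "(h * (p - e))\<^sup>2 < (\<delta> * \<bar>q\<bar>)\<^sup>2" by (simp add: power_mult_distrib)
  then show ?thesis by (rule power_less_imp_less_base) (use \<open>0 \<le> \<delta>\<close> in simp)
qed

lemma cusp_touching_point:
  fixes p q \<delta> h r :: real
  assumes fe: "f - e = 2 * \<delta>" and "0 < \<delta>" and h: "0 \<le> h" "h\<^sup>2 = r\<^sup>2 - \<delta>\<^sup>2" and "0 \<le> r"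
    and key: "h * (p - e) < \<delta> * \<bar>q\<bar>" and right: "e + f \<le> 2 * p"
  shows "\<exists>l R C. 0 \<le> l \<and> l \<le> 1 \<and> 0 \<le> R \<and> R\<^sup>2 = r\<^sup>2 - l * (1 - l) * (f - e)\<^sup>2 \<and> C \<in> lens r e f
     \<and> dist (p, q) C + R \<le> dist (p, q) ((1 - l) * e + l * f, 0)"
proof -
  \<comment> \<open>C is the corner of the lens on the side of (p,q), and (g,0) is where the line from (p,q)
    through C meets the axis.\<close>
  define m where "m = (e + f) / 2"
  have m: "m = e + \<delta>" "m = f - \<delta>" "m \<le> p" using fe right by (simp_all add: m_def field_simps)
  have "h * \<delta> \<le> h * (p - e)" using m h(1) by (intro mult_left_mono) auto
  then have "\<delta> * h < \<delta> * \<bar>q\<bar>" using key by (simp add: mult.commute)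
  then have qh: "h < \<bar>q\<bar>" using \<open>0 < \<delta>\<close> by simp
  define \<tau> where "\<tau> = h / (\<bar>q\<bar> - h)"
  have \<tau>: "0 \<le> \<tau>" "\<tau> * (\<bar>q\<bar> - h) = h" using qh h(1) by (simp_all add: \<tau>_def)
  define g where "g = m - \<tau> * (p - m)"
  have "(\<bar>q\<bar> - h) * (\<tau> * (p - m)) = h * (p - m)"
    using \<tau>(2) by (simp add: ac_simps)
  also have "\<dots> \<le> (\<bar>q\<bar> - h) * \<delta>" using key m(1) by (simp add: algebra_simps)
  finally have "(\<bar>q\<bar> - h) * (\<tau> * (p - m)) \<le> (\<bar>q\<bar> - h) * \<delta>" .
  then have "\<tau> * (p - m) \<le> \<delta>" using qh by simp
  moreover have "0 \<le> \<tau> * (p - m)" using m(3) \<tau>(1) by simp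
  ultimately have g: "e \<le> g" "g \<le> m" using m(1) unfolding g_def by linarith+
  define l where "l = (g - e) / (f - e)"
  have l: "0 \<le> l" "l \<le> 1" "(1 - l) * e + l * f = g"
    using g fe \<open>0 < \<delta>\<close> m by (auto simp: l_def field_simps)
  define sh where "sh = (if 0 \<le> q then h else - h)"
  define C where "C = (m, sh)"
  have sh: "sh\<^sup>2 = h\<^sup>2" "sh = \<tau> * (q - sh)" using \<tau>(2) by (auto simp: sh_def algebra_simps)
  have "(dist C (e, 0))\<^sup>2 = r\<^sup>2" using sh(1) h(2) unfolding C_def dist_Pair_sq m(1) by simp
  moreover have "(dist C (f, 0))\<^sup>2 = r\<^sup>2" using sh(1) h(2) unfolding C_def dist_Pair_sq m(2) by simp
  ultimately have C_circles: "dist C (e, 0) = r" "dist C (f, 0) = r"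
    using \<open>0 \<le> r\<close> dist_eq_if_sq_eq by blast+
  have "C - (g, 0) = \<tau> *\<^sub>R ((p, q) - C)" using sh(2) by (simp add: C_def g_def)
  then have "dist (p, q) C + dist C (g, 0) = dist (p, q) (g, 0)"
    using \<tau>(1) by (rule dist_add_dist_if_aligned)
  moreover have "C \<in> lens r e f" using C_circles by (simp add: in_lens_iff covers_def)
  moreover have "(dist C (g, 0))\<^sup>2 = r\<^sup>2 - l * (1 - l) * (f - e)\<^sup>2"
    using dist_sq_convex_comb[of C l e f] C_circles l(3) by (simp add: algebra_simps)
  ultimately show ?thesis using l by (intro exI[of _ l] exI[of _ "dist C (g, 0)"] exI[of _ C]) auto
qed

lemma dist_left_end_gt_if_outside_lens:
  assumes "e \<le> f" "e + f \<le> 2 * p" "(p, q) \<notin> lens r e f"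
  shows "r < dist (p, q) (e, 0)"
proof -
  have "\<bar>p - f\<bar> \<le> \<bar>p - e\<bar>" using assms(1,2) by linarith
  then have "(dist (p, q) (f, 0))\<^sup>2 \<le> (dist (p, q) (e, 0))\<^sup>2"
    unfolding dist_Pair_sq by (simp add: abs_le_square_iff)
  then have "dist (p, q) (f, 0) \<le> dist (p, q) (e, 0)" by (rule power2_le_imp_le) simp
  moreover have "\<not> (dist (p, q) (e, 0) \<le> r \<and> dist (p, q) (f, 0) \<le> r)"
    using assms(3) by (simp add: in_lens_iff covers_def)
  ultimately show ?thesis by linarith
qed

lemma lens_comparison_right_half:
  fixes p q :: real and Q y :: "real \<times> real"
  assumes ef: "e \<le> f" "f - e \<le> 2 * r" and "0 \<le> r" and right: "e + f \<le> 2 * p"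
    and closer: "dist (p, q) (e, 0) \<le> dist Q (e, 0)" "dist (p, q) (f, 0) \<le> dist Q (f, 0)"
    and y: "y \<in> lens r e f"
  shows "\<exists>w\<in>lens r e f. dist (p, q) w \<le> dist Q y"
proof (cases "(p, q) \<in> lens r e f")
  case True
  then show ?thesis by (intro bexI[of _ "(p, q)"]) simp_all
next
  case outside: False
  define dE where "dE = dist (p, q) (e, 0)"
  define \<delta> where "\<delta> = (f - e) / 2"
  have \<delta>: "0 \<le> \<delta>" "\<delta> \<le> r" "f - e = 2 * \<delta>" "\<delta> \<le> p - e"
    using ef right unfolding \<delta>_def by auto
  have dE: "dE\<^sup>2 = (p - e)\<^sup>2 + q\<^sup>2" "0 \<le> dE" unfolding dE_def dist_Pair_sq by simp_all
  have "r < dE" unfolding dE_def using dist_left_end_gt_if_outside_lens[OF ef(1) right outside] .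
  \<comment> \<open>The nearest lens point is the radial point on the arc about (e,0) if that point lies in
    the lens, and otherwise the corner of the lens on the side of (p,q).\<close>
  show ?thesis
  proof (cases "(f - e) * ((f - e) * dE - 2 * r * (p - e)) \<le> 0")
    case True
    define w where "w = (e + (r / dE) * (p - e), (r / dE) * q)"
    have w: "w \<in> lens r e f" "dist (p, q) w = dE - r"
      using radial_point_in_lens[OF dE(1) \<open>r < dE\<close> \<open>0 \<le> r\<close> True refl] by (auto simp: w_def)
    have "dist (p, q) w \<le> dist Q y"
      by (rule dist_le_dist_to_lens_if_touching[where l = 0 and R = r and e = e and f = f])
        (use w(2) \<open>0 \<le> r\<close> y closer in \<open>simp_all add: dE_def\<close>)
    then show ?thesis using w(1) by blast
  next
    case False
    then have "0 < 2 * \<delta> * (2 * \<delta> * dE - 2 * r * (p - e))" using \<delta>(3) by simp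
    then have "0 < \<delta>" "r * (p - e) < \<delta> * dE" using \<delta>(1) by (auto simp: zero_less_mult_iff)
    define h where "h = sqrt (r\<^sup>2 - \<delta>\<^sup>2)"
    have "\<delta>\<^sup>2 \<le> r\<^sup>2" using \<delta> by (simp add: power_mono)
    then have h: "0 \<le> h" "h\<^sup>2 = r\<^sup>2 - \<delta>\<^sup>2" by (simp_all add: h_def)
    have "h * (p - e) < \<delta> * \<bar>q\<bar>"
      using cusp_condition[OF dE \<open>r * (p - e) < \<delta> * dE\<close> \<delta>(4,1) \<open>0 \<le> r\<close> h(2,1)] .
    then obtain l R C where lRC: "0 \<le> l" "l \<le> 1" "0 \<le> R" "R\<^sup>2 = r\<^sup>2 - l * (1 - l) * (f - e)\<^sup>2"
      "C \<in> lens r e f" "dist (p, q) C + R \<le> dist (p, q) ((1 - l) * e + l * f, 0)"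
      using cusp_touching_point[OF \<delta>(3) \<open>0 < \<delta>\<close> h \<open>0 \<le> r\<close> _ right] by blast
    have "dist (p, q) C \<le> dist Q y"
      using dist_le_dist_to_lens_if_touching[OF lRC(1-4) \<open>0 \<le> r\<close> y lRC(6) closer] .
    then show ?thesis using lRC(5) by blast
  qed
qed

definition reflect :: "real \<Rightarrow> real \<Rightarrow> real \<times> real \<Rightarrow> real \<times> real" where
  "reflect e f z = (e + f - fst z, snd z)"

lemma dist_reflect: "dist (reflect e f a) (reflect e f b) = dist a b"
  by (cases a, cases b) (simp add: reflect_def dist_Pair_Pair dist_real_def abs_minus_commute)

lemma reflect_reflect [simp]: "reflect e f (reflect e f a) = a"
  by (simp add: reflect_def)

lemma reflect_ends [simp]: "reflect e f (e, 0) = (f, 0)" "reflect e f (f, 0) = (e, 0)"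
  by (simp_all add: reflect_def)

lemma reflect_in_lens: "a \<in> lens r e f \<Longrightarrow> reflect e f a \<in> lens r e f"
  using dist_reflect[of e f a "(e, 0)"] dist_reflect[of e f a "(f, 0)"]
  by (auto simp: in_lens_iff covers_def)

lemma lens_comparison:
  fixes P Q y :: "real \<times> real"
  assumes "e \<le> f" "f - e \<le> 2 * r" "0 \<le> r"
    and closer: "dist P (e, 0) \<le> dist Q (e, 0)" "dist P (f, 0) \<le> dist Q (f, 0)"
    and y: "y \<in> lens r e f"
  shows "\<exists>w\<in>lens r e f. dist P w \<le> dist Q y"
proof (cases "e + f \<le> 2 * fst P")
  case True
  then show ?thesis
    using lens_comparison_right_half[OF assms(1-3) _ _ _ y, of "fst P" "snd P"] closer by simp
next
  case False
  let ?P = "reflect e f P" and ?Q = "reflect e f Q"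
  have "e + f \<le> 2 * fst ?P" using False by (simp add: reflect_def)
  moreover have "dist ?P (e, 0) \<le> dist ?Q (e, 0)" "dist ?P (f, 0) \<le> dist ?Q (f, 0)"
    using closer dist_reflect[of e f P] dist_reflect[of e f Q]
    by (metis reflect_ends)+
  ultimately have "\<exists>w\<in>lens r e f. dist ?P w \<le> dist ?Q (reflect e f y)"
    using lens_comparison_right_half[OF assms(1-3) _ _ _ reflect_in_lens[OF y], of "fst ?P" "snd ?P" ?Q]
    by simp
  then obtain w where "w \<in> lens r e f" "dist ?P w \<le> dist ?Q (reflect e f y)" ..
  then have "reflect e f w \<in> lens r e f" "dist P (reflect e f w) \<le> dist Q y"
    using reflect_in_lens dist_reflect by (metis reflect_reflect)+
  then show ?thesis by blast
qed

definition nearest_lens_point :: "real \<Rightarrow> real \<times> real \<Rightarrow> real \<Rightarrow> real \<Rightarrow> real \<times> real" where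
  "nearest_lens_point r P e f = (SOME w. w \<in> lens r e f \<and> dist P w = infdist P (lens r e f))"

lemma nearest_lens_point:
  assumes "e \<le> f" "f - e \<le> 2 * r"
  shows "nearest_lens_point r P e f \<in> lens r e f"
    and "dist P (nearest_lens_point r P e f) = infdist P (lens r e f)"
proof -
  have "lens r e f \<noteq> {}" using midpoint_in_lens[OF assms] by blast
  moreover have "closed (lens r e f)" by (simp add: lens_def closed_Int)
  ultimately have "\<exists>w. w \<in> lens r e f \<and> dist P w = infdist P (lens r e f)"
    by (metis infdist_attains_inf)
  then have "nearest_lens_point r P e f \<in> lens r e f \<and>
      dist P (nearest_lens_point r P e f) = infdist P (lens r e f)"
    unfolding nearest_lens_point_def by (rule someI_ex)
  then show "nearest_lens_point r P e f \<in> lens r e f"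
    and "dist P (nearest_lens_point r P e f) = infdist P (lens r e f)" by simp_all
qed

lemma infdist_lens_mono:
  fixes P Q :: "real \<times> real"
  assumes "e \<le> f" "f - e \<le> 2 * r" "0 \<le> r"
    and "dist P (e, 0) \<le> dist Q (e, 0)" "dist P (f, 0) \<le> dist Q (f, 0)"
  shows "infdist P (lens r e f) \<le> infdist Q (lens r e f)"
proof -
  obtain w where "w \<in> lens r e f" "dist P w \<le> dist Q (nearest_lens_point r Q e f)"
    using lens_comparison[OF assms nearest_lens_point(1)[OF assms(1,2)]] by blast
  then show ?thesis using nearest_lens_point(2)[OF assms(1,2)] infdist_le order_trans by metis
qed

definition sq_dist_diff :: "real \<times> real \<Rightarrow> real \<times> real \<Rightarrow> real \<Rightarrow> real" where
  "sq_dist_diff P Q s = (dist P (s, 0))\<^sup>2 - (dist Q (s, 0))\<^sup>2"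

lemma sq_dist_diff_affine:
  "(s3 - s1) * sq_dist_diff P Q s2 = (s3 - s2) * sq_dist_diff P Q s1 + (s2 - s1) * sq_dist_diff P Q s3"
  by (cases P, cases Q)
    (simp only: sq_dist_diff_def dist_Pair_sq, simp add: power2_eq_square algebra_simps)

lemma sq_dist_diff_swap: "sq_dist_diff Q P s = - sq_dist_diff P Q s"
  by (simp add: sq_dist_diff_def)

lemma sq_dist_diff_neg_iff: "sq_dist_diff P Q s < 0 \<longleftrightarrow> dist P (s, 0) < dist Q (s, 0)"
  unfolding sq_dist_diff_def
  by (meson diff_less_0_iff_less power2_less_imp_less power_strict_mono zero_le_dist zero_less_numeral)

lemma sq_dist_diff_sign_pattern:
  assumes "s1 < s2" "s2 < s3"
    and "sq_dist_diff P Q s1 \<le> 0" "0 \<le> sq_dist_diff P Q s2" "sq_dist_diff P Q s3 \<le> 0"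
  shows "sq_dist_diff P Q s1 = 0" "sq_dist_diff P Q s2 = 0"
proof -
  have "(s3 - s2) * sq_dist_diff P Q s1 \<le> 0" "(s2 - s1) * sq_dist_diff P Q s3 \<le> 0"
    "0 \<le> (s3 - s1) * sq_dist_diff P Q s2"
    using assms by (simp_all add: mult_nonneg_nonpos)
  then have "(s3 - s2) * sq_dist_diff P Q s1 = 0" "(s3 - s1) * sq_dist_diff P Q s2 = 0"
    using sq_dist_diff_affine[of s3 s1 P Q s2] by linarith+
  then show "sq_dist_diff P Q s1 = 0" "sq_dist_diff P Q s2 = 0" using assms(1,2) by simp_all
qed

lemma sum_set_mset_le_sum_mset:
  fixes f :: "'a \<Rightarrow> real"
  assumes "\<And>x. 0 \<le> f x"
  shows "(\<Sum>x\<in>set_mset M. f x) \<le> (\<Sum>x\<in>#M. f x)"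
proof (induction M)
  case (add x M)
  have "(\<Sum>x\<in>set_mset (add_mset x M). f x) \<le> f x + (\<Sum>x\<in>set_mset M. f x)"
    using assms by (cases "x \<in># M") (simp_all add: insert_absorb)
  then show ?case using add.IH by simp
qed simp

lemma sum_insert_remove_le:
  fixes g :: "'a \<Rightarrow> real"
  assumes "finite A" "a \<in> A" "0 \<le> g b"
  shows "sum g (insert b (A - {a})) \<le> sum g A - g a + g b"
  using assms by (cases "b \<in> A - {a}") (simp_all add: insert_absorb sum_diff1)

definition separated :: "real \<times> real \<Rightarrow> real \<times> real \<Rightarrow> bool" where
  "separated J1 J2 \<longleftrightarrow> snd J1 < fst J2 \<or> snd J2 < fst J1"

locale line_instance =
  fixes T :: "real set" and B :: "'b set" and pos :: "'b \<Rightarrow> real \<times> real"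
    and c :: "'b \<Rightarrow> real" and r :: real and rank :: "'b \<Rightarrow> nat"
  assumes finite_T: "finite T" and finite_B: "finite B" and B_ne: "B \<noteq> {}"
    and r_nonneg: "0 \<le> r" and inj_rank: "inj_on rank B"
begin

definition admissible :: "(real \<times> real) set" where
  "admissible = {J. fst J \<in> T \<and> snd J \<in> T \<and> fst J \<le> snd J \<and> snd J - fst J \<le> 2 * r}"

definition serve_cost :: "'b \<Rightarrow> real \<times> real \<Rightarrow> real" where
  "serve_cost k J = infdist (pos k) (lens r (fst J) (snd J))"

text \<open>
  Lists are compared lexicographically; the rank component makes the winner a strict minimum.
\<close>
definition preference :: "'b \<Rightarrow> real \<times> real \<Rightarrow> real list" where
  "preference k J = [serve_cost k J, (dist (pos k) ((fst J + snd J) / 2, 0))\<^sup>2, real (rank k)]"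

definition winner :: "'b set \<Rightarrow> real \<times> real \<Rightarrow> 'b" where
  "winner Op J = arg_min_on (\<lambda>k. preference k J) Op"

lemma admissible_bounds:
  assumes "J \<in> admissible"
  shows "fst J \<le> snd J" and "snd J - fst J \<le> 2 * r"
  using assms by (simp_all add: admissible_def)

lemma winner_in: "Op \<subseteq> B \<Longrightarrow> Op \<noteq> {} \<Longrightarrow> winner Op J \<in> Op"
  unfolding winner_def using finite_B by (meson arg_min_if_finite(1) finite_subset)

lemma preference_winner_less:
  assumes "Op \<subseteq> B" "k \<in> Op" "k \<noteq> winner Op J"
  shows "preference (winner Op J) J < preference k J"
proof -
  have "finite Op" "Op \<noteq> {}" using assms(1,2) finite_B finite_subset by auto
  then have "preference (winner Op J) J \<le> preference k J"
    unfolding winner_def using assms(2) by (rule arg_min_least)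
  moreover have "rank (winner Op J) \<noteq> rank k"
    using assms winner_in[OF assms(1) \<open>Op \<noteq> {}\<close>] inj_rank by (metis inj_on_eq_iff subsetD)
  then have "preference (winner Op J) J \<noteq> preference k J" by (simp add: preference_def)
  ultimately show ?thesis by simp
qed

lemma serve_cost_winner_le:
  "Op \<subseteq> B \<Longrightarrow> k \<in> Op \<Longrightarrow> serve_cost (winner Op J) J \<le> serve_cost k J"
  using preference_winner_less[of Op k J] by (cases "k = winner Op J") (auto simp: preference_def)

lemma winner_closer_somewhere:
  assumes "Op \<subseteq> B" "k \<in> Op" "k \<noteq> winner Op J" "J \<in> admissible"
  shows "\<exists>s. fst J \<le> s \<and> s \<le> snd J \<and> (sq_dist_diff (pos (winner Op J)) (pos k) s < 0
    \<or> sq_dist_diff (pos (winner Op J)) (pos k) s = 0 \<and> rank (winner Op J) < rank k)"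
proof -
  obtain e f where J: "J = (e, f)" by fastforce
  have ef: "e \<le> f" "f - e \<le> 2 * r" using admissible_bounds[OF assms(4)] by (simp_all add: J)
  let ?w = "winner Op J"
  let ?d = "\<lambda>k. (dist (pos k) ((e + f) / 2, 0))\<^sup>2"
  have mid: "e \<le> (e + f) / 2" "(e + f) / 2 \<le> f" using ef by simp_all
  have "serve_cost ?w J < serve_cost k J \<or> serve_cost ?w J = serve_cost k J \<and>
      (?d ?w < ?d k \<or> ?d ?w = ?d k \<and> rank ?w < rank k)"
    using preference_winner_less[OF assms(1-3)] by (simp add: preference_def J)
  then show ?thesis
  proof (elim disjE conjE)
    assume "serve_cost ?w J < serve_cost k J"
    then have "dist (pos ?w) (e, 0) < dist (pos k) (e, 0) \<or> dist (pos ?w) (f, 0) < dist (pos k) (f, 0)"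
      using infdist_lens_mono[OF ef r_nonneg, of "pos k" "pos ?w"] by (force simp: serve_cost_def J)
    then show ?thesis using ef unfolding J sq_dist_diff_neg_iff[symmetric] by auto
  next
    assume "?d ?w < ?d k"
    then show ?thesis using mid by (intro exI[of _ "(e + f) / 2"]) (simp add: J sq_dist_diff_def)
  next
    assume "?d ?w = ?d k" "rank ?w < rank k"
    then show ?thesis using mid by (intro exI[of _ "(e + f) / 2"]) (simp add: J sq_dist_diff_def)
  qed
qed

lemma winner_no_sandwich:
  assumes "Op \<subseteq> B" "Op \<noteq> {}" "J1 \<in> admissible" "J2 \<in> admissible" "J3 \<in> admissible"
    and "snd J1 < fst J2" "snd J2 < fst J3" and "winner Op J3 = winner Op J1"
  shows "winner Op J2 = winner Op J1"
proof (rule ccontr)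
  assume ne: "winner Op J2 \<noteq> winner Op J1"
  let ?k = "winner Op J1" and ?k' = "winner Op J2"
  have in_Op: "?k \<in> Op" "?k' \<in> Op" using winner_in assms(1,2) by blast+
  obtain s1 where s1: "fst J1 \<le> s1" "s1 \<le> snd J1" "sq_dist_diff (pos ?k) (pos ?k') s1 \<le> 0"
    "sq_dist_diff (pos ?k) (pos ?k') s1 = 0 \<longrightarrow> rank ?k < rank ?k'"
    using winner_closer_somewhere[OF assms(1) in_Op(2) ne assms(3)] by force
  obtain s3 where s3: "fst J3 \<le> s3" "s3 \<le> snd J3" "sq_dist_diff (pos ?k) (pos ?k') s3 \<le> 0"
    using winner_closer_somewhere[OF assms(1) in_Op(2) _ assms(5)] ne assms(8) by force
  obtain s2 where s2: "fst J2 \<le> s2" "s2 \<le> snd J2" "0 \<le> sq_dist_diff (pos ?k) (pos ?k') s2"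
    "sq_dist_diff (pos ?k) (pos ?k') s2 = 0 \<longrightarrow> rank ?k' < rank ?k"
    using winner_closer_somewhere[OF assms(1) in_Op(1) ne[symmetric] assms(4)]
    by (force simp: sq_dist_diff_swap[of "pos ?k'"])
  have "s1 < s2" "s2 < s3" using s1 s2 s3 assms(6,7) by linarith+
  from sq_dist_diff_sign_pattern[OF this s1(3) s2(3) s3(3)] show False using s1(4) s2(4) by simp
qed

text \<open>The last conjunct matters because winner {} J is an unspecified value.\<close>
definition interval_cover :: "'b set \<Rightarrow> (real \<times> real) set \<Rightarrow> bool" where
  "interval_cover Op JJ \<longleftrightarrow> Op \<subseteq> B \<and> JJ \<subseteq> admissible
     \<and> (\<forall>t\<in>T. \<exists>J\<in>JJ. fst J \<le> t \<and> t \<le> snd J) \<and> (JJ \<noteq> {} \<longrightarrow> Op \<noteq> {})"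

definition cover_cost :: "'b set \<Rightarrow> (real \<times> real) set \<Rightarrow> real" where
  "cover_cost Op JJ = (\<Sum>k\<in>Op. c k) + (\<Sum>J\<in>JJ. serve_cost (winner Op J) J)"

definition winner_sensor :: "'b set \<Rightarrow> real \<times> real \<Rightarrow> 'b \<times> (real \<times> real)" where
  "winner_sensor Op J = (winner Op J, nearest_lens_point r (pos (winner Op J)) (fst J) (snd J))"

definition cover_solution :: "'b set \<Rightarrow> (real \<times> real) set \<Rightarrow> ('b \<times> (real \<times> real)) multiset" where
  "cover_solution Op JJ = image_mset (winner_sensor Op) (mset_set JJ)"

lemma finite_admissible: "finite admissible"
proof -
  have "admissible \<subseteq> T \<times> T" by (auto simp: admissible_def)
  then show ?thesis using finite_T by (meson finite_SigmaI finite_subset)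
qed

lemma interval_cover_finite: "interval_cover Op JJ \<Longrightarrow> finite JJ"
  unfolding interval_cover_def using finite_admissible finite_subset by blast

lemma interval_cover_covers:
  "interval_cover Op JJ \<Longrightarrow> t \<in> T \<Longrightarrow> \<exists>J\<in>JJ. fst J \<le> t \<and> t \<le> snd J"
  unfolding interval_cover_def by blast

lemma interval_cover_winner_in:
  "interval_cover Op JJ \<Longrightarrow> J \<in> JJ \<Longrightarrow> winner Op J \<in> Op"
  unfolding interval_cover_def using winner_in by blast

lemma winner_sensor_in_lens:
  "interval_cover Op JJ \<Longrightarrow> J \<in> JJ \<Longrightarrow> snd (winner_sensor Op J) \<in> lens r (fst J) (snd J)"
  unfolding interval_cover_def winner_sensor_def
  using nearest_lens_point(1) admissible_bounds by (metis snd_conv subsetD)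

lemma mem_cover_solution:
  "interval_cover Op JJ \<Longrightarrow> s \<in># cover_solution Op JJ \<longleftrightarrow> (\<exists>J\<in>JJ. s = winner_sensor Op J)"
  unfolding cover_solution_def using interval_cover_finite by auto

lemma feasible_cover_solution:
  assumes "interval_cover Op JJ"
  shows "feasible T B r Op (cover_solution Op JJ)"
  unfolding feasible_def
proof (intro conjI ballI)
  show "Op \<subseteq> B" using assms by (simp add: interval_cover_def)
next
  fix s assume "s \<in># cover_solution Op JJ"
  then show "fst s \<in> Op"
    using mem_cover_solution[OF assms] interval_cover_winner_in[OF assms]
    by (auto simp: winner_sensor_def)
next
  fix t assume "t \<in> T"
  then obtain J where J: "J \<in> JJ" "fst J \<le> t" "t \<le> snd J"
    using assms interval_cover_covers by blast
  then have "covers r (snd (winner_sensor Op J)) t"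
    using covers_if_in_lens winner_sensor_in_lens[OF assms] by blast
  then show "\<exists>s\<in>#cover_solution Op JJ. covers r (snd s) t"
    using mem_cover_solution[OF assms] J(1) by blast
qed

lemma cost_cover_solution:
  assumes "interval_cover Op JJ"
  shows "cost pos c Op (cover_solution Op JJ) = cover_cost Op JJ"
proof -
  have "(\<Sum>s\<in>#cover_solution Op JJ. dist (pos (fst s)) (snd s))
      = (\<Sum>J\<in>JJ. dist (pos (winner Op J)) (snd (winner_sensor Op J)))"
    by (simp add: cover_solution_def sum_unfold_sum_mset multiset.map_comp o_def winner_sensor_def)
  also have "\<dots> = (\<Sum>J\<in>JJ. serve_cost (winner Op J) J)"
  proof (rule sum.cong)
    fix J assume "J \<in> JJ"
    then have "J \<in> admissible" using assms by (auto simp: interval_cover_def)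
    then show "dist (pos (winner Op J)) (snd (winner_sensor Op J)) = serve_cost (winner Op J) J"
      by (simp add: winner_sensor_def serve_cost_def nearest_lens_point(2)[OF admissible_bounds])
  qed simp
  finally show ?thesis by (simp add: cost_def cover_cost_def)
qed

lemma covered_target_in_interval:
  "t \<in> covered_targets T r p \<Longrightarrow> interval_left T r p \<le> t \<and> t \<le> interval_right T r p"
  using finite_T by (simp add: covered_targets_def interval_left_def interval_right_def)

lemma target_interval:
  assumes "covered_targets T r p \<noteq> {}"
  shows "(interval_left T r p, interval_right T r p) \<in> admissible"
    and "p \<in> lens r (interval_left T r p) (interval_right T r p)"
proof -
  have fin: "finite (covered_targets T r p)" using finite_T by (simp add: covered_targets_def)
  let ?a = "interval_left T r p" and ?b = "interval_right T r p"
  have ab: "?a \<in> covered_targets T r p" "?b \<in> covered_targets T r p"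
    using fin assms by (simp_all add: interval_left_def interval_right_def)
  then show p: "p \<in> lens r ?a ?b" by (simp add: in_lens_iff covered_targets_def)
  have "dist (?a, 0::real) (?b, 0) \<le> dist (?a, 0) p + dist p (?b, 0)" by (rule dist_triangle)
  also have "\<dots> \<le> 2 * r" using p by (simp add: lens_def dist_commute)
  finally have "\<bar>?a - ?b\<bar> \<le> 2 * r" by (simp add: dist_Pair_Pair dist_real_def)
  moreover have "?a \<le> ?b" using covered_target_in_interval[OF ab(2)] by simp
  ultimately show "(?a, ?b) \<in> admissible"
    using ab by (simp add: admissible_def covered_targets_def)
qed

lemma interval_cover_of_feasible:
  assumes feas: "feasible T B r Op S"
  shows "\<exists>JJ. interval_cover Op JJ \<and> cover_cost Op JJ \<le> cost pos c Op S"
proof -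
  define I where "I p = (interval_left T r p, interval_right T r p)" for p
  define S' where "S' = {s \<in> set_mset S. covered_targets T r (snd s) \<noteq> {}}"
  define JJ where "JJ = (\<lambda>s. I (snd s)) ` S'"
  have Op: "Op \<subseteq> B" "\<forall>s\<in>#S. fst s \<in> Op" using feas by (simp_all add: feasible_def)
  have "interval_cover Op JJ" unfolding interval_cover_def
  proof (intro conjI ballI impI)
    show "JJ \<subseteq> admissible" using target_interval(1) unfolding JJ_def S'_def I_def by blast
    show "JJ \<noteq> {} \<Longrightarrow> Op \<noteq> {}" using Op(2) by (auto simp: JJ_def S'_def)
    fix t assume "t \<in> T"
    then obtain s where "s \<in># S" "t \<in> covered_targets T r (snd s)"
      using feas by (auto simp: feasible_def covered_targets_def)
    then have "I (snd s) \<in> JJ" "fst (I (snd s)) \<le> t \<and> t \<le> snd (I (snd s))"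
      using covered_target_in_interval by (auto simp: JJ_def S'_def I_def)
    then show "\<exists>J\<in>JJ. fst J \<le> t \<and> t \<le> snd J" by blast
  qed (use Op in simp)
  moreover have "(\<Sum>J\<in>JJ. serve_cost (winner Op J) J) \<le> (\<Sum>s\<in>#S. dist (pos (fst s)) (snd s))"
  proof -
    have "(\<Sum>J\<in>JJ. serve_cost (winner Op J) J) \<le> (\<Sum>s\<in>S'. serve_cost (winner Op (I (snd s))) (I (snd s)))"
      unfolding JJ_def using sum_image_le[of S' "\<lambda>J. serve_cost (winner Op J) J"]
      by (simp add: S'_def serve_cost_def infdist_nonneg o_def)
    also have "\<dots> \<le> (\<Sum>s\<in>S'. dist (pos (fst s)) (snd s))"
    proof (rule sum_mono)
      fix s assume s: "s \<in> S'"
      then have "serve_cost (winner Op (I (snd s))) (I (snd s)) \<le> serve_cost (fst s) (I (snd s))"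
        using Op by (intro serve_cost_winner_le) (auto simp: S'_def)
      also have "\<dots> \<le> dist (pos (fst s)) (snd s)"
        using s target_interval(2)[of "snd s"] by (simp add: S'_def serve_cost_def I_def infdist_le)
      finally show "serve_cost (winner Op (I (snd s))) (I (snd s)) \<le> dist (pos (fst s)) (snd s)" .
    qed
    also have "\<dots> \<le> (\<Sum>s\<in>set_mset S. dist (pos (fst s)) (snd s))"
      by (rule sum_mono2) (auto simp: S'_def)
    also have "\<dots> \<le> (\<Sum>s\<in>#S. dist (pos (fst s)) (snd s))"
      by (rule sum_set_mset_le_sum_mset) simp
    finally show ?thesis .
  qed
  ultimately show ?thesis by (auto simp: cover_cost_def cost_def)
qed

text \<open>The card term makes dropping an interval of length zero a strict decrease.\<close>
definition cover_size :: "(real \<times> real) set \<Rightarrow> real" where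
  "cover_size JJ = (\<Sum>J\<in>JJ. snd J - fst J) + real (card JJ)"

definition better_cover :: "'b set \<Rightarrow> (real \<times> real) set \<Rightarrow> (real \<times> real) set \<Rightarrow> bool" where
  "better_cover Op JJ' JJ \<longleftrightarrow>
     interval_cover Op JJ' \<and> cover_cost Op JJ' \<le> cover_cost Op JJ \<and> cover_size JJ' < cover_size JJ"

lemma drop_nested_interval:
  assumes C: "interval_cover Op JJ" and J: "J1 \<in> JJ" "J2 \<in> JJ" "J1 \<noteq> J2"
    and nested: "fst J1 \<le> fst J2" "snd J2 \<le> snd J1"
  shows "better_cover Op (JJ - {J2}) JJ"
proof -
  have fin: "finite JJ" using C by (rule interval_cover_finite)
  have "\<forall>t\<in>T. \<exists>J\<in>JJ - {J2}. fst J \<le> t \<and> t \<le> snd J"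
  proof
    fix t assume "t \<in> T"
    then obtain J where J': "J \<in> JJ" "fst J \<le> t" "t \<le> snd J" using C interval_cover_covers by blast
    show "\<exists>J\<in>JJ - {J2}. fst J \<le> t \<and> t \<le> snd J"
    proof (cases "J = J2")
      case True
      then have "fst J1 \<le> t \<and> t \<le> snd J1" using J' nested by auto
      then show ?thesis using J by blast
    qed (use J' in blast)
  qed
  then have "interval_cover Op (JJ - {J2})" using C J by (auto simp: interval_cover_def)
  moreover have "cover_cost Op (JJ - {J2}) \<le> cover_cost Op JJ"
    using J(2) fin by (simp add: cover_cost_def sum_diff1 serve_cost_def infdist_nonneg)
  moreover have "cover_size (JJ - {J2}) < cover_size JJ"
  proof -
    have "0 \<le> snd J2 - fst J2" "0 < card JJ"
      using C J(2) fin by (auto simp: interval_cover_def admissible_def card_gt_0_iff)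
    then show ?thesis using J(2) fin by (simp add: cover_size_def sum_diff1 of_nat_diff)
  qed
  ultimately show ?thesis by (simp add: better_cover_def)
qed

lemma interval_cover_replace_overlapped:
  assumes C: "interval_cover Op JJ" and J: "J1 \<in> JJ" "J2 \<in> JJ" "fst J1 < fst J2"
    and J2': "J2' \<in> admissible" "snd J2' = snd J2"
    and gap: "\<And>t. t \<in> T \<Longrightarrow> snd J1 < t \<Longrightarrow> fst J2' \<le> t"
  shows "interval_cover Op (insert J2' (JJ - {J2}))"
proof -
  have "\<exists>J\<in>insert J2' (JJ - {J2}). fst J \<le> t \<and> t \<le> snd J" if t: "t \<in> T" for t
  proof -
    obtain J where J': "J \<in> JJ" "fst J \<le> t" "t \<le> snd J" using C t interval_cover_covers by blast
    show ?thesis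
    proof (cases "J = J2")
      case True
      show ?thesis
      proof (cases "snd J1 < t")
        case True
        then show ?thesis using gap[OF t] J' J2'(2) \<open>J = J2\<close> by auto
      next
        case False
        then have "fst J1 \<le> t \<and> t \<le> snd J1" using J' J(3) \<open>J = J2\<close> by auto
        then show ?thesis using J by auto
      qed
    qed (use J' in auto)
  qed
  then show ?thesis using C J2'(1) J by (auto simp: interval_cover_def)
qed

lemma shrink_overlapping_interval:
  assumes C: "interval_cover Op JJ" and J: "J1 \<in> JJ" "J2 \<in> JJ"
    and overlap: "fst J1 < fst J2" "fst J2 \<le> snd J1" "snd J1 < snd J2"
  shows "\<exists>JJ'. better_cover Op JJ' JJ"
proof -
  have fin: "finite JJ" using C by (rule interval_cover_finite)
  have J2: "J2 \<in> admissible" "Op \<subseteq> B" "Op \<noteq> {}" using C J(2) by (auto simp: interval_cover_def)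
  define U where "U = {t\<in>T. snd J1 < t}"
  have U: "finite U" "snd J2 \<in> U" using finite_T J2(1) overlap(3) by (simp_all add: U_def admissible_def)
  define J2' where "J2' = (Min U, snd J2)"
  have "Min U \<in> U" "Min U \<le> snd J2" using U by (auto intro: Min_in)
  then have J2': "J2' \<in> admissible" "fst J2 < fst J2'" "snd J2' = snd J2"
    using J2(1) overlap by (auto simp: J2'_def U_def admissible_def)
  define JJ' where "JJ' = insert J2' (JJ - {J2})"
  have cover: "interval_cover Op JJ'"
    unfolding JJ'_def using C J overlap(1) J2'(1,3)
    by (rule interval_cover_replace_overlapped) (use U(1) in \<open>simp add: J2'_def U_def\<close>)
  have "serve_cost (winner Op J2') J2' \<le> serve_cost (winner Op J2) J2'"
    using J2 winner_in by (intro serve_cost_winner_le)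
  also have "\<dots> \<le> serve_cost (winner Op J2) J2"
    unfolding serve_cost_def
    using J2' admissible_bounds[OF J2'(1)] midpoint_in_lens[OF admissible_bounds[OF J2(1)]]
    by (intro infdist_mono lens_antimono) auto
  finally have "cover_cost Op JJ' \<le> cover_cost Op JJ"
    using sum_insert_remove_le[OF fin J(2), of "\<lambda>J. serve_cost (winner Op J) J" J2']
    by (simp add: cover_cost_def JJ'_def serve_cost_def infdist_nonneg)
  moreover have "(\<Sum>J\<in>JJ'. snd J - fst J) < (\<Sum>J\<in>JJ. snd J - fst J)"
    using sum_insert_remove_le[OF fin J(2), of "\<lambda>J. snd J - fst J" J2'] J2' admissible_bounds[OF J2'(1)]
    by (simp add: JJ'_def)
  moreover have "card JJ' \<le> card JJ"
    using fin card_Suc_Diff1[OF fin J(2)] by (simp add: JJ'_def card_insert_if)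
  ultimately show ?thesis using cover by (auto simp: better_cover_def cover_size_def)
qed

lemma unseparated_cover_improvable:
  assumes C: "interval_cover Op JJ" and J: "J1 \<in> JJ" "J2 \<in> JJ" "J1 \<noteq> J2"
    and "\<not> separated J1 J2"
  shows "\<exists>JJ'. better_cover Op JJ' JJ"
proof -
  have "\<exists>JJ'. better_cover Op JJ' JJ"
    if A: "A1 \<in> JJ" "A2 \<in> JJ" "A1 \<noteq> A2" "fst A1 \<le> fst A2" "fst A2 \<le> snd A1" for A1 A2
  proof (cases "snd A2 \<le> snd A1")
    case True
    then show ?thesis using drop_nested_interval[OF C A(1-4)] by blast
  next
    case False
    show ?thesis
    proof (cases "fst A1 = fst A2")
      case True
      then show ?thesis using drop_nested_interval[OF C A(2,1) A(3)[symmetric]] False by fastforce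
    next
      case False
      then show ?thesis using shrink_overlapping_interval[OF C A(1,2)] A(4,5) \<open>\<not> snd A2 \<le> snd A1\<close>
        by simp
    qed
  qed
  moreover have "fst J1 \<le> snd J2" "fst J2 \<le> snd J1" using assms(5) by (auto simp: separated_def)
  ultimately show ?thesis using J by (cases "fst J1 \<le> fst J2") simp_all
qed

lemma exists_optimal_separated_cover:
  "\<exists>Op JJ. interval_cover Op JJ \<and> pairwise separated JJ
     \<and> (\<forall>Op' JJ'. interval_cover Op' JJ' \<longrightarrow> cover_cost Op JJ \<le> cover_cost Op' JJ')"
proof -
  define CS where "CS = {(Op, JJ). interval_cover Op JJ}"
  have "CS \<subseteq> Pow B \<times> Pow admissible" by (auto simp: CS_def interval_cover_def)
  then have "finite CS" using finite_B finite_admissible by (meson finite_Pow_iff finite_SigmaI finite_subset)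
  have "(B, (\<lambda>t. (t, t)) ` T) \<in> CS"
    using B_ne r_nonneg by (auto simp: CS_def interval_cover_def admissible_def)
  then have "CS \<noteq> {}" by blast
  define key where "key x = [cover_cost (fst x) (snd x), cover_size (snd x)]" for x
  obtain Op JJ where x0: "(Op, JJ) = arg_min_on key CS" by (metis surj_pair)
  have "(Op, JJ) \<in> CS" using arg_min_if_finite(1)[OF \<open>finite CS\<close> \<open>CS \<noteq> {}\<close>] x0 by simp
  then have C: "interval_cover Op JJ" by (simp add: CS_def)
  have least: "key (Op, JJ) \<le> key (Op', JJ')" if "interval_cover Op' JJ'" for Op' JJ'
    using arg_min_least[OF \<open>finite CS\<close> \<open>CS \<noteq> {}\<close>, of "(Op', JJ')" key] that x0 by (simp add: CS_def)
  have "pairwise separated JJ"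
  proof (rule pairwiseI, rule ccontr)
    fix J1 J2 assume "J1 \<in> JJ" "J2 \<in> JJ" "J1 \<noteq> J2" "\<not> separated J1 J2"
    then obtain JJ' where "better_cover Op JJ' JJ" using unseparated_cover_improvable[OF C] by blast
    then show False using least[of Op JJ'] by (auto simp: better_cover_def key_def)
  qed
  moreover have "cover_cost Op JJ \<le> cover_cost Op' JJ'" if "interval_cover Op' JJ'" for Op' JJ'
    using least[OF that] by (auto simp: key_def)
  ultimately show ?thesis using C by blast
qed

lemma winner_sensor_uncovered_beyond:
  assumes C: "interval_cover Op JJ" and J: "J \<in> JJ"
    and cov: "covers r (snd (winner_sensor Op J)) x" and uncov: "\<not> covers r (snd (winner_sensor Op J)) t"
  shows "x \<le> t \<Longrightarrow> snd J < t" and "t \<le> x \<Longrightarrow> t < fst J"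
proof -
  have ends: "covers r (snd (winner_sensor Op J)) (fst J)" "covers r (snd (winner_sensor Op J)) (snd J)"
    using winner_sensor_in_lens[OF C J] by (simp_all add: in_lens_iff)
  show "x \<le> t \<Longrightarrow> snd J < t" using covers_between[OF cov ends(2)] uncov by fastforce
  show "t \<le> x \<Longrightarrow> t < fst J" using covers_between[OF ends(1) cov] uncov by (meson not_le)
qed

lemma contiguous_cover_solution:
  assumes C: "interval_cover Op JJ" and sep: "pairwise separated JJ"
  shows "contiguous_property T r Op (cover_solution Op JJ)"
  unfolding contiguous_property_def
proof (intro ballI allI impI)
  fix k u v t
  assume "k \<in> Op"
    and H: "u \<in># cover_solution Op JJ \<and> fst u = k \<and> covered_targets T r (snd u) \<noteq> {} \<and>
       v \<in># cover_solution Op JJ \<and> fst v = k \<and> covered_targets T r (snd v) \<noteq> {} \<and>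
       (\<forall>w\<in>#cover_solution Op JJ. fst w = k \<and> covered_targets T r (snd w) \<noteq> {} \<longrightarrow>
           interval_left T r (snd u) \<le> interval_left T r (snd w)) \<and>
       (\<forall>w\<in>#cover_solution Op JJ. fst w = k \<and> covered_targets T r (snd w) \<noteq> {} \<longrightarrow>
           interval_right T r (snd w) \<le> interval_right T r (snd v))"
    and "t \<in> T" and t: "interval_left T r (snd u) \<le> t \<and> t \<le> interval_right T r (snd v)"
  show "\<exists>w\<in>#cover_solution Op JJ. fst w = k \<and> covers r (snd w) t"
  proof (rule ccontr)
    assume uncovered: "\<not> (\<exists>w\<in>#cover_solution Op JJ. fst w = k \<and> covers r (snd w) t)"
    obtain Ju Jv where J: "Ju \<in> JJ" "u = winner_sensor Op Ju" "Jv \<in> JJ" "v = winner_sensor Op Jv"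
      using H mem_cover_solution[OF C] by meson
    then have k: "winner Op Ju = k" "winner Op Jv = k" using H by (auto simp: winner_sensor_def)
    have "covers r (snd u) (interval_left T r (snd u))" "covers r (snd v) (interval_right T r (snd v))"
      using H target_interval(2) by (simp_all add: in_lens_iff)
    moreover have "\<not> covers r (snd u) t" "\<not> covers r (snd v) t" using H uncovered by auto
    ultimately have "snd Ju < t" "t < fst Jv"
      using winner_sensor_uncovered_beyond[OF C] J t by blast+
    obtain J where J': "J \<in> JJ" "fst J \<le> t" "t \<le> snd J"
      using C \<open>t \<in> T\<close> interval_cover_covers by blast
    have "winner Op J \<noteq> k"
    proof
      assume "winner Op J = k"
      moreover have "winner_sensor Op J \<in># cover_solution Op JJ" using mem_cover_solution[OF C] J'(1) by blast
      moreover have "covers r (snd (winner_sensor Op J)) t"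
        using covers_if_in_lens[OF winner_sensor_in_lens[OF C J'(1)] J'(2,3)] .
      ultimately show False using uncovered by (auto simp: winner_sensor_def)
    qed
    then have "separated Ju J" "separated J Jv" using sep J J'(1) k by (auto simp: pairwise_def)
    moreover have "fst Ju \<le> snd Ju" "fst Jv \<le> snd Jv"
      using C J admissible_bounds(1) by (auto simp: interval_cover_def)
    ultimately have "snd Ju < fst J" "snd J < fst Jv"
      using J' \<open>snd Ju < t\<close> \<open>t < fst Jv\<close> by (auto simp: separated_def)
    then show False
      using winner_no_sandwich[of Op Ju J Jv] C J J'(1) k \<open>winner Op J \<noteq> k\<close>
      by (auto simp: interval_cover_def)
  qed
qed

theorem optimal_contiguous_solution:
  "\<exists>Op S. optimal T B pos c r Op S \<and> contiguous_property T r Op S"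
proof -
  obtain Op JJ where C: "interval_cover Op JJ" and "pairwise separated JJ"
    and least: "\<And>Op' JJ'. interval_cover Op' JJ' \<Longrightarrow> cover_cost Op JJ \<le> cover_cost Op' JJ'"
    using exists_optimal_separated_cover by blast
  have "optimal T B pos c r Op (cover_solution Op JJ)"
    unfolding optimal_def
  proof (intro conjI allI impI)
    show "feasible T B r Op (cover_solution Op JJ)" using C by (rule feasible_cover_solution)
    fix Op' S' assume "feasible T B r Op' S'"
    then obtain JJ' where "interval_cover Op' JJ'" "cover_cost Op' JJ' \<le> cost pos c Op' S'"
      using interval_cover_of_feasible by blast
    then show "cost pos c Op (cover_solution Op JJ) \<le> cost pos c Op' S'"
      using least cost_cover_solution[OF C] by fastforce
  qed
  then show ?thesis using contiguous_cover_solution[OF C \<open>pairwise separated JJ\<close>] by blast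
qed

end

theorem lemma3:
  fixes T :: "real set" and B :: "'b set" and pos :: "'b \<Rightarrow> real \<times> real"
    and c :: "'b \<Rightarrow> real" and r :: real
  assumes "finite T" and "finite B" and "B \<noteq> {}"
    and "r \<ge> 0"
    and "\<forall>k \<in> B. c k \<ge> 0"
    and "\<forall>k \<in> B. snd (pos k) \<ge> 0"
  shows "\<exists>Op S. optimal T B pos c r Op S \<and> contiguous_property T r Op S"
proof -
  obtain rank :: "'b \<Rightarrow> nat" where "inj_on rank B"
    using assms(2) finite_imp_inj_to_nat_seg by blast
  then interpret line_instance T B pos c r rank
    using assms(1-4) by unfold_locales
  show ?thesis by (rule optimal_contiguous_solution)
qed

end
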